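(* Let $g\in\omega^\omega$ with $g(k)>0$ for all $k$ and $g$ tending to infinity. Then $\mathfrak c_{\omega,g}=\mathfrak c_{\omega,\mathcal C}$.
   Context: A slalom is a sequence $S=\langle S_k\mid k<\omega\rangle$ of finite subsets of $\omega$; $x\in\omega^\omega$ is captured by $S$, written $x\in^*S$, if $x(k)\in S_k$ for all but finitely many $k$. $\mathfrak c_{\omega,g}:=\min\{|\mathcal S|:\mathcal S\subseteq\prod_{k<\omega}[\omega]^{\le g(k)},\ \forall x\in\omega^\omega\ \exists S\in\mathcal S: x\in^*S\}$. $\mathcal C$ is the set of all slaloms $S$ with $\sum_{k\ge1}|S_k|/k^2<\infty$, and $\mathfrak c_{\omega,\mathcal C}:=\min\{|\mathcal S|:\mathcal S\subseteq\mathcal C,\ \forall x\in\omega^\omega\ \exists S\in\mathcal S: x\in^*S\}$. *)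

theory Defs
  imports Complex_Main
begin

type_synonym slalom = "nat \<Rightarrow> nat set"

definition is_slalom :: "slalom \<Rightarrow> bool" where
  "is_slalom S \<longleftrightarrow> (\<forall>k. finite (S k))"

definition captured :: "(nat \<Rightarrow> nat) \<Rightarrow> slalom \<Rightarrow> bool" where
  "captured x S \<longleftrightarrow> (\<forall>\<^sub>F k in sequentially. x k \<in> S k)"

definition g_slaloms :: "(nat \<Rightarrow> nat) \<Rightarrow> slalom set" where
  "g_slaloms g = {S. is_slalom S \<and> (\<forall>k. card (S k) \<le> g k)}"

definition C_slaloms :: "slalom set" where
  "C_slaloms = {S. is_slalom S \<and> summable (\<lambda>k. real (card (S (Suc k))) / (real (Suc k))^2)}"

definition covering :: "slalom set \<Rightarrow> bool" where
  "covering \<S> \<longleftrightarrow> (\<forall>x. \<exists>S\<in>\<S>. captured x S)"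

text \<open>Equality of the two minimal cardinalities c_{omega,g} = c_{omega,C}, expressed as:
  every covering family from one class can be matched by a covering family from the
  other class of no larger cardinality (and vice versa).\<close>
definition same_covering_number :: "slalom set \<Rightarrow> slalom set \<Rightarrow> bool" where
  "same_covering_number A B \<longleftrightarrow>
     (\<forall>F. F \<subseteq> A \<and> covering F \<longrightarrow> (\<exists>G. G \<subseteq> B \<and> covering G \<and> (card_of G, card_of F) \<in> ordLeq)) \<and>
     (\<forall>G. G \<subseteq> B \<and> covering G \<longrightarrow> (\<exists>F. F \<subseteq> A \<and> covering F \<and> (card_of F, card_of G) \<in> ordLeq))"

end

theory Submission
  imports Defs "HOL-Analysis.Summation_Tests" "HOL-Library.Nat_Bijection"
    "HOL-Library.Discrete_Functions"
begin

text \<open>Any two unbounded size bounds give the same covering number, because a slalom whose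
  sizes are eventually bounded by \<open>s\<close> can be converted into one bounded by \<open>t\<close> everywhere.
  Choose a slowly growing reindexing \<open>\<nu>\<close> with \<open>s (\<nu> k) \<le> t k\<close> eventually, and cover,
  instead of \<open>x\<close>, the function \<open>y\<close> whose value at \<open>n\<close> codes a sufficiently long initial
  segment of \<open>x\<close>: decoding the \<open>k\<close>-th entry of the codes in \<open>S (\<nu> k)\<close> yields at most
  \<open>s (\<nu> k)\<close> candidates for \<open>x k\<close>. Since \<open>\<Sum> \<surd>k / k\<^sup>2 < \<infinity>\<close>, slaloms bounded by \<open>\<surd>k\<close> lie
  in \<open>\<C>\<close>, while slaloms in \<open>\<C>\<close> are eventually bounded by \<open>k\<^sup>2\<close>; so both classes are
  interchangeable with the slaloms bounded by \<open>g\<close>.\<close>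

lemma exists_slow_reindexing:
  fixes s t :: "nat \<Rightarrow> nat"
  assumes t: "filterlim t at_top sequentially"
  shows "\<exists>\<nu>. filterlim \<nu> at_top sequentially \<and> (\<forall>\<^sub>F k in sequentially. s (\<nu> k) \<le> t k)"
proof -
  define A where "A k = insert 0 {n. n \<le> k \<and> s n \<le> t k}" for k
  define \<nu> where "\<nu> k = Max (A k)" for k
  have fin: "finite (A k)" for k
    unfolding A_def by auto
  have "\<forall>\<^sub>F k in sequentially. N \<le> \<nu> k" for N
    using eventually_ge_at_top[of N] t[unfolded filterlim_at_top, rule_format, of "s N"]
  proof eventually_elim
    case (elim k)
    then have "N \<in> A k" unfolding A_def by simp
    then show ?case unfolding \<nu>_def using fin by (rule Max_ge[rotated])
  qed
  then have "filterlim \<nu> at_top sequentially"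
    by (simp add: filterlim_at_top)
  moreover have "\<forall>\<^sub>F k in sequentially. s (\<nu> k) \<le> t k"
    using t[unfolded filterlim_at_top, rule_format, of "s 0"]
  proof eventually_elim
    case (elim k)
    have "\<nu> k \<in> A k" unfolding \<nu>_def using fin by (rule Max_in) (simp add: A_def)
    with elim show ?case unfolding A_def by auto
  qed
  ultimately show ?thesis by blast
qed

lemma filterlim_at_top_preimage_bound:
  fixes \<nu> :: "nat \<Rightarrow> nat"
  assumes "filterlim \<nu> at_top sequentially"
  shows "\<exists>L. \<forall>k. k < L (\<nu> k)"
proof -
  have "\<forall>\<^sub>F k in sequentially. Suc n \<le> \<nu> k" for n
    using assms by (simp add: filterlim_at_top)
  then have "\<forall>n. \<exists>K. \<forall>k\<ge>K. n < \<nu> k"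
    by (simp add: eventually_sequentially Suc_le_eq)
  then obtain L where L: "\<And>n k. L n \<le> k \<Longrightarrow> n < \<nu> k"
    by metis
  have "k < L (\<nu> k)" for k
    using L[of "\<nu> k" k] by linarith
  then show ?thesis by blast
qed

text \<open>The codes in \<open>S (\<nu> k)\<close> are read as lists whose \<open>k\<close>-th entries are the candidates
  for the value at \<open>k\<close>; when there are more than \<open>t k\<close> of them, the entry is emptied, so
  that the bound \<open>t\<close> holds everywhere and not only eventually.\<close>
definition decoded_slalom :: "(nat \<Rightarrow> nat) \<Rightarrow> (nat \<Rightarrow> nat) \<Rightarrow> slalom \<Rightarrow> slalom" where
  "decoded_slalom \<nu> t S k =
     (let A = (\<lambda>c. list_decode c ! k) ` S (\<nu> k) in if card A \<le> t k then A else {})"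

lemma decoded_slalom_in_g_slaloms:
  assumes "is_slalom S"
  shows "decoded_slalom \<nu> t S \<in> g_slaloms t"
  using assms unfolding g_slaloms_def is_slalom_def decoded_slalom_def Let_def by auto

lemma captured_decoded_slalom:
  assumes S: "is_slalom S" "\<forall>\<^sub>F n in sequentially. card (S n) \<le> s n"
    and \<nu>: "filterlim \<nu> at_top sequentially" "\<forall>\<^sub>F k in sequentially. s (\<nu> k) \<le> t k"
    and L: "\<forall>k. k < L (\<nu> k)"
    and captured: "captured (\<lambda>n. list_encode (map x [0..<L n])) S"
  shows "captured x (decoded_slalom \<nu> t S)"
proof -
  have "\<forall>\<^sub>F k in sequentially. list_encode (map x [0..<L (\<nu> k)]) \<in> S (\<nu> k)"
    using captured \<nu>(1) unfolding captured_def by (rule eventually_compose_filterlim)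
  moreover have "\<forall>\<^sub>F k in sequentially. card (S (\<nu> k)) \<le> s (\<nu> k)"
    using S(2) \<nu>(1) by (rule eventually_compose_filterlim)
  ultimately have "\<forall>\<^sub>F k in sequentially. x k \<in> decoded_slalom \<nu> t S k"
    using \<nu>(2)
  proof eventually_elim
    case (elim k)
    let ?A = "(\<lambda>c. list_decode c ! k) ` S (\<nu> k)"
    have "card ?A \<le> card (S (\<nu> k))"
      using S(1) unfolding is_slalom_def by (simp add: card_image_le)
    with elim have "card ?A \<le> t k" by linarith
    moreover have "x k = list_decode (list_encode (map x [0..<L (\<nu> k)])) ! k"
      using L by (simp add: list_encode_inverse)
    with elim have "x k \<in> ?A" by blast
    ultimately show ?case unfolding decoded_slalom_def Let_def by simp
  qed
  then show ?thesis unfolding captured_def .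
qed

lemma covering_in_g_slaloms_if_eventually_bounded:
  fixes s t :: "nat \<Rightarrow> nat"
  assumes cov: "covering F"
    and F: "\<forall>S\<in>F. is_slalom S \<and> (\<forall>\<^sub>F n in sequentially. card (S n) \<le> s n)"
    and t: "filterlim t at_top sequentially"
  shows "\<exists>G. G \<subseteq> g_slaloms t \<and> covering G \<and> (card_of G, card_of F) \<in> ordLeq"
proof -
  obtain \<nu> where \<nu>: "filterlim \<nu> at_top sequentially" "\<forall>\<^sub>F k in sequentially. s (\<nu> k) \<le> t k"
    using exists_slow_reindexing[OF t] by blast
  obtain L where L: "\<forall>k. k < L (\<nu> k)"
    using filterlim_at_top_preimage_bound[OF \<nu>(1)] by blast
  let ?G = "decoded_slalom \<nu> t ` F"
  have "covering ?G"
    unfolding covering_def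
  proof
    fix x :: "nat \<Rightarrow> nat"
    obtain S where "S \<in> F" "captured (\<lambda>n. list_encode (map x [0..<L n])) S"
      using cov unfolding covering_def by blast
    with F \<nu> L show "\<exists>T\<in>?G. captured x T"
      using captured_decoded_slalom by blast
  qed
  moreover have "?G \<subseteq> g_slaloms t"
    using F decoded_slalom_in_g_slaloms by blast
  ultimately show ?thesis
    using card_of_image by blast
qed

lemma filterlim_floor_sqrt_at_top: "filterlim floor_sqrt at_top sequentially"
  unfolding filterlim_at_top eventually_sequentially
  by (meson le_floor_sqrtI)

lemma g_slaloms_floor_sqrt_subset_C_slaloms: "g_slaloms floor_sqrt \<subseteq> C_slaloms"
proof
  fix S assume S: "S \<in> g_slaloms floor_sqrt"
  have bound: "real (card (S (Suc k))) / (real (Suc k))\<^sup>2 \<le> real (Suc k) powr (-3/2)" for k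
  proof -
    let ?n = "real (Suc k)"
    have "real (card (S (Suc k))) \<le> real (floor_sqrt (Suc k))"
      using S unfolding g_slaloms_def by simp
    also have "\<dots> \<le> sqrt ?n"
      by (rule real_le_rsqrt) (metis floor_sqrt_power2_le of_nat_le_iff of_nat_power)
    also have "\<dots> = ?n powr (1/2)"
      by (simp add: powr_half_sqrt)
    finally have "real (card (S (Suc k))) / ?n powr 2 \<le> ?n powr (1/2) / ?n powr 2"
      by (simp add: divide_right_mono)
    also have "\<dots> = ?n powr (1/2 - 2)"
      by (rule powr_diff[symmetric])
    finally show ?thesis
      by (simp add: powr_numeral)
  qed
  have "summable (\<lambda>k. real (Suc k) powr (-3/2))"
    using summable_Suc_iff[of "\<lambda>n. real n powr (-3/2)"] summable_real_powr_iff[of "-3/2"]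
    by simp
  then have "summable (\<lambda>k. real (card (S (Suc k))) / (real (Suc k))\<^sup>2)"
    by (rule summable_comparison_test[rotated]) (use bound in simp)
  with S show "S \<in> C_slaloms"
    unfolding g_slaloms_def C_slaloms_def by simp
qed

lemma C_slaloms_eventually_card_le_square:
  assumes "S \<in> C_slaloms"
  shows "\<forall>\<^sub>F n in sequentially. card (S n) \<le> n\<^sup>2"
proof -
  have "(\<lambda>k. real (card (S (Suc k))) / (real (Suc k))\<^sup>2) \<longlonglongrightarrow> 0"
    using assms unfolding C_slaloms_def by (simp add: summable_LIMSEQ_zero)
  then have "\<forall>\<^sub>F k in sequentially. real (card (S (Suc k))) / (real (Suc k))\<^sup>2 < 1"
    by (rule order_tendstoD) simp
  then have "\<forall>\<^sub>F k in sequentially. card (S (Suc k)) \<le> (Suc k)\<^sup>2"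
  proof eventually_elim
    case (elim k)
    then have "real (card (S (Suc k))) < (real (Suc k))\<^sup>2"
      by (simp add: divide_less_eq)
    then show ?case
      by (metis less_imp_le of_nat_le_iff of_nat_power)
  qed
  then show ?thesis
    by (subst eventually_sequentially_Suc[symmetric])
qed

theorem lemma10p6:
  fixes g :: "nat \<Rightarrow> nat"
  assumes "\<forall>k. g k > 0"
    and "filterlim g at_top sequentially"
  shows "same_covering_number (g_slaloms g) C_slaloms"
  unfolding same_covering_number_def
proof (intro conjI allI impI)
  fix F assume F: "F \<subseteq> g_slaloms g \<and> covering F"
  then have "\<forall>S\<in>F. is_slalom S \<and> (\<forall>\<^sub>F n in sequentially. card (S n) \<le> g n)"
    unfolding g_slaloms_def by auto
  then obtain G where "G \<subseteq> g_slaloms floor_sqrt" "covering G" "(card_of G, card_of F) \<in> ordLeq"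
    using covering_in_g_slaloms_if_eventually_bounded[OF conjunct2[OF F] _ filterlim_floor_sqrt_at_top]
    by blast
  with g_slaloms_floor_sqrt_subset_C_slaloms
  show "\<exists>G. G \<subseteq> C_slaloms \<and> covering G \<and> (card_of G, card_of F) \<in> ordLeq"
    by blast
next
  fix G assume G: "G \<subseteq> C_slaloms \<and> covering G"
  then have "\<forall>S\<in>G. is_slalom S \<and> (\<forall>\<^sub>F n in sequentially. card (S n) \<le> n\<^sup>2)"
    using C_slaloms_eventually_card_le_square unfolding C_slaloms_def by blast
  then show "\<exists>F. F \<subseteq> g_slaloms g \<and> covering F \<and> (card_of F, card_of G) \<in> ordLeq"
    by (rule covering_in_g_slaloms_if_eventually_bounded[OF conjunct2[OF G] _ assms(2)])
qed
end
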